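(* Let $W:\mathbb{T}\to(-\infty,\infty]$ satisfy (H1)–(H4) and let $\alpha>0$. Let $\rho$ be a Borel probability measure on $\mathbb{T}$. (i) There exists a closed arc $I$ with $\mathcal{D}[\rho]=\rho(I)-|I|$. (ii) If $\rho_n\rightharpoonup\rho$ weakly in the set of probability measures, then $\mathcal{D}[\rho]=\lim_{n\to\infty}\mathcal{D}[\rho_n]$. (iii) If $\rho_n\rightharpoonup\rho$, then $\mathcal{H}[\rho]\le\liminf_{n\to\infty}\mathcal{H}[\rho_n]$. (iv) If $\rho_n\rightharpoonup\rho$, then $\mathcal{G}_\alpha[\rho]\le\liminf_{n\to\infty}\mathcal{G}_\alpha[\rho_n]$.
   Context: $\mathbb{T}=\mathbb{R}/\mathbb{Z}$ with Lebesgue measure $|\cdot|$. Hypotheses on $W$: (H1) $W\in L^1(\mathbb{T})\cap C^2(\mathbb{T}\setminus\{0\})$ and $\int_{\mathbb{T}}W=0$; (H2) $W(x)=W(-x)$; (H3) $\lim_{x\to0}W(x)=W(0)=\infty$; (H4) there is $C_1>0$ with $W''(x)\ge C_1$ on $\mathbb{T}\setminus\{0\}$. For a probability measure $\rho$: $(W*\rho)(x)=\int W(x-y)\,d\rho(y)$, $\mathcal{H}[\rho]=-\operatorname{ess\,inf}_{\mathbb{T}}(W*\rho)$ (w.r.t. Lebesgue measure), $\mathcal{D}[\rho]=\sup_I(\rho(I)-|I|)$ over closed arcs $I$, and $\mathcal{G}_\alpha[\rho]=\mathcal{H}[\rho]/\mathcal{D}[\rho]^\alpha$. Weak convergence $\rho_n\rightharpoonup\rho$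 means $\int f\,d\rho_n\to\int f\,d\rho$ for all $f\in C(\mathbb{T})$. *)

theory Defs
  imports "HOL-Probability.Probability"
begin

text \<open>The torus T = R/Z is modelled by the fundamental domain [0,1).
  A Borel probability measure on T is a probability measure on the Borel sets of [0,1).\<close>

definition torus_prob :: "real measure \<Rightarrow> bool" where
  "torus_prob \<rho> \<longleftrightarrow> prob_space \<rho> \<and> sets \<rho> = sets (restrict_space borel {0..<1::real})"

definition arc :: "real \<Rightarrow> real \<Rightarrow> real set" where
  "arc a l = frac ` {a..a+l}"

definition discr :: "real measure \<Rightarrow> real" where
  "discr \<rho> = Sup {measure \<rho> (arc a l) - l | a l. 0 \<le> l \<and> l \<le> 1}"

text \<open>Weak convergence: integrals of all continuous functions on T (= continuous 1-periodic
  functions on R) converge.\<close>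
definition weak_conv :: "(nat \<Rightarrow> real measure) \<Rightarrow> real measure \<Rightarrow> bool" where
  "weak_conv \<rho>s \<rho> \<longleftrightarrow>
     (\<forall>f::real \<Rightarrow> real. continuous_on UNIV f \<and> (\<forall>x. f (x + 1) = f x) \<longrightarrow>
        (\<lambda>n. \<integral>x. f x \<partial>(\<rho>s n)) \<longlonglongrightarrow> (\<integral>x. f x \<partial>\<rho>))"

definition conv :: "(real \<Rightarrow> ereal) \<Rightarrow> real measure \<Rightarrow> real \<Rightarrow> ereal" where
  "conv W \<rho> x =
     enn2ereal (\<integral>\<^sup>+ y. e2ennreal (W (x - y)) \<partial>\<rho>)
     - enn2ereal (\<integral>\<^sup>+ y. e2ennreal (- W (x - y)) \<partial>\<rho>)"

definition essinf :: "'a measure \<Rightarrow> ('a \<Rightarrow> ereal) \<Rightarrow> ereal" where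
  "essinf M f = Sup {z. AE x in M. z \<le> f x}"

definition Hfun :: "(real \<Rightarrow> ereal) \<Rightarrow> real measure \<Rightarrow> ereal" where
  "Hfun W \<rho> = - essinf (lebesgue_on {0..<1}) (conv W \<rho>)"

definition Gfun :: "(real \<Rightarrow> ereal) \<Rightarrow> real \<Rightarrow> real measure \<Rightarrow> ereal" where
  "Gfun W \<alpha> \<rho> = Hfun W \<rho> / ereal (discr \<rho> powr \<alpha>)"

end

theory Submission
  imports Defs
begin

text \<open>
  Closed arcs are parametrised by centre and half-length, which range over a compact set, and
  the measure of a closed arc is upper semicontinuous in these parameters (it is the decreasing
  limit of the measures of slightly longer arcs); a maximising sequence of arcs therefore has a
  subsequence converging to an arc attaining the discrepancy. Under weak convergence the indicator
  of an arc is squeezed between continuous periodic tent functions: one near-optimal arc of the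
  limit gives the lower bound, and a finite grid of arcs, covering every arc up to an error
  \<open>1/N\<close>, gives the upper bound.

  For \<open>H\<close>, a real lower bound \<open>z\<close> for \<open>W * \<rho>\<close> on \<open>[0,1)\<close> is tested on subintervals:
  \<open>z (d - c) \<le> \<integral>\<^sub>c\<^sup>d W * \<rho> = \<integral> (\<integral>\<^sub>c\<^sup>d W(x - y) dx) d\<rho>(y)\<close> by Fubini, and the inner
  integral is a continuous periodic function of \<open>y\<close>, so these inequalities pass to weak limits;
  Lebesgue differentiation turns them back into an almost-everywhere bound. Since \<open>W\<close> has mean
  zero, \<open>H \<ge> 0\<close>, and together with the convergence of \<open>D\<^sup>\<alpha>\<close> this gives the statement for
  \<open>G\<^sub>\<alpha>\<close>.
\<close>

text \<open>Written via \<open>arccos\<close> so that continuity is immediate; \<open>circle_dist_eq_round\<close> identifies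
  it with the distance to the nearest integer.\<close>

definition circle_dist :: "real \<Rightarrow> real" where
  "circle_dist s = arccos (cos (2 * pi * s)) / (2 * pi)"

lemma circle_dist_eq_round: "circle_dist s = \<bar>s - of_int (round s)\<bar>"
proof -
  define u where "u = \<bar>s - of_int (round s)\<bar>"
  have u: "0 \<le> u" "u \<le> 1/2"
    using of_int_round_abs_le[of s] by (auto simp: u_def abs_minus_commute)
  have "cos (2 * pi * s) = cos (2 * pi * (s - of_int (round s)))"
    by (simp add: right_diff_distrib cos_diff)
  also have "\<dots> = cos (2 * pi * u)"
  proof (cases "s - of_int (round s) \<ge> 0")
    case False
    then show ?thesis
      by (simp add: u_def) (metis cos_minus minus_diff_eq mult_minus_right)
  qed (simp add: u_def)
  finally show ?thesis
    using u by (simp add: circle_dist_def arccos_cos u_def)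
qed

lemma continuous_circle_dist: "continuous_on UNIV circle_dist"
  unfolding circle_dist_def
  by (intro continuous_intros continuous_on_compose2[OF continuous_on_arccos']) auto

lemma circle_dist_le_dist_int: "circle_dist s \<le> \<bar>s - of_int m\<bar>"
  using round_diff_minimal[of s m] by (simp add: circle_dist_eq_round)

lemma circle_dist_le_abs: "circle_dist s \<le> \<bar>s\<bar>"
  using circle_dist_le_dist_int[of s 0] by simp

lemma circle_dist_le_half: "circle_dist s \<le> 1/2"
  using of_int_round_abs_le[of s] by (simp add: circle_dist_eq_round abs_minus_commute)

lemma circle_dist_triangle: "circle_dist (x + y) \<le> circle_dist x + circle_dist y"
proof -
  have "circle_dist (x + y) \<le> \<bar>x + y - of_int (round x + round y)\<bar>"
    by (rule circle_dist_le_dist_int)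
  also have "\<dots> \<le> circle_dist x + circle_dist y"
    by (simp add: circle_dist_eq_round abs_triangle_ineq[THEN order_trans[rotated]] algebra_simps)
  finally show ?thesis .
qed

lemma circle_dist_add_int: "circle_dist (s + of_int k) = circle_dist s"
  unfolding circle_dist_def by (simp add: distrib_left cos_add mult.assoc[symmetric])

definition centred_arc :: "real \<Rightarrow> real \<Rightarrow> real set" where
  "centred_arc c h = {t. 0 \<le> t \<and> t < 1 \<and> circle_dist (t - c) \<le> h}"

lemma arc_eq_centred_arc:
  assumes "0 \<le> l"
  shows "arc a l = centred_arc (a + l/2) (l/2)"
proof
  show "arc a l \<subseteq> centred_arc (a + l/2) (l/2)"
  proof
    fix t assume "t \<in> arc a l"
    then obtain s where s: "a \<le> s" "s \<le> a + l" "t = frac s" by (auto simp: arc_def)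
    have "t - (a + l/2) = (s - (a + l/2)) + of_int (- \<lfloor>s\<rfloor>)"
      using s by (simp add: frac_def)
    then have "circle_dist (t - (a + l/2)) = circle_dist (s - (a + l/2))"
      by (metis circle_dist_add_int)
    also have "\<dots> \<le> l/2"
      using circle_dist_le_abs[of "s - (a + l/2)"] s(1,2) by linarith
    finally show "t \<in> centred_arc (a + l/2) (l/2)"
      using s frac_lt_1[of s] by (simp add: centred_arc_def)
  qed
  show "centred_arc (a + l/2) (l/2) \<subseteq> arc a l"
  proof
    fix t assume t: "t \<in> centred_arc (a + l/2) (l/2)"
    define m where "m = round (t - (a + l/2))"
    have "\<bar>t - (a + l/2) - of_int m\<bar> \<le> l/2"
      using t by (simp add: centred_arc_def circle_dist_eq_round m_def)
    then have "t - of_int m \<in> {a..a+l}" by (simp, arith)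
    moreover have "frac (t - of_int m) = t"
      using t by (simp add: centred_arc_def frac_unique_iff)
    ultimately show "t \<in> arc a l" unfolding arc_def by (metis image_eqI)
  qed
qed

lemma centred_arc_frac: "centred_arc (frac c) h = centred_arc c h"
proof -
  have "circle_dist (t - frac c) = circle_dist (t - c)" for t
    using circle_dist_add_int[of "t - c" "\<lfloor>c\<rfloor>"] by (simp add: frac_def algebra_simps)
  then show ?thesis by (simp add: centred_arc_def)
qed

lemma centred_arc_full: "1/2 \<le> h \<Longrightarrow> centred_arc c h = {0..<1}"
  by (auto simp: centred_arc_def intro: order_trans[OF circle_dist_le_half])

lemma centred_arc_mono: "h \<le> h' \<Longrightarrow> centred_arc c h \<subseteq> centred_arc c h'"
  by (auto simp: centred_arc_def)

lemma centred_arc_subset: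
  assumes "circle_dist (c - c') \<le> e"
  shows "centred_arc c h \<subseteq> centred_arc c' (h + e)"
proof
  fix t assume "t \<in> centred_arc c h"
  moreover have "circle_dist (t - c') \<le> circle_dist (t - c) + circle_dist (c - c')"
    using circle_dist_triangle[of "t - c" "c - c'"] by simp
  ultimately show "t \<in> centred_arc c' (h + e)"
    using assms by (auto simp: centred_arc_def)
qed

lemma centred_arc_borel: "centred_arc c h \<in> sets borel"
proof -
  have "centred_arc c h = {0..<1} \<inter> {t. circle_dist (t - c) \<le> h}"
    by (auto simp: centred_arc_def)
  moreover have "closed {t. circle_dist (t - c) \<le> h}"
    by (intro closed_Collect_le continuous_on_compose2[OF continuous_circle_dist])
       (auto intro!: continuous_intros)
  ultimately show ?thesis by auto
qed

lemma torus_prob_prob_space: "torus_prob \<mu> \<Longrightarrow> prob_space \<mu>"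
  unfolding torus_prob_def by simp

lemma space_torus_prob: "torus_prob \<mu> \<Longrightarrow> space \<mu> = {0..<1}"
  unfolding torus_prob_def
  by (metis sets_eq_imp_space_eq space_borel space_restrict_space inf_top_right)

lemma sets_torus_prob: "torus_prob \<mu> \<Longrightarrow> A \<in> sets borel \<Longrightarrow> A \<subseteq> {0..<1} \<Longrightarrow> A \<in> sets \<mu>"
  unfolding torus_prob_def by (simp add: sets_restrict_space_iff)

lemma measurable_torus_prob:
  "torus_prob \<mu> \<Longrightarrow> f \<in> borel_measurable borel \<Longrightarrow> f \<in> borel_measurable \<mu>"
  unfolding torus_prob_def by (metis measurable_cong_sets measurable_restrict_space1)

lemma centred_arc_in_sets: "torus_prob \<mu> \<Longrightarrow> centred_arc c h \<in> sets \<mu>"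
  by (rule sets_torus_prob[OF _ centred_arc_borel]) (auto simp: centred_arc_def)

lemma measure_centred_arc_full: "torus_prob \<mu> \<Longrightarrow> 1/2 \<le> h \<Longrightarrow> measure \<mu> (centred_arc c h) = 1"
  by (metis centred_arc_full space_torus_prob torus_prob_prob_space prob_space.prob_space)

lemma measure_centred_arc_mono:
  "torus_prob \<mu> \<Longrightarrow> A \<subseteq> centred_arc c h \<Longrightarrow> measure \<mu> A \<le> measure \<mu> (centred_arc c h)"
  by (metis centred_arc_in_sets torus_prob_prob_space prob_space.finite_measure
      finite_measure.finite_measure_mono)

definition discr_values :: "real measure \<Rightarrow> real set" where
  "discr_values \<mu> = {measure \<mu> (centred_arc c h) - 2 * h | c h. 0 \<le> h \<and> h \<le> 1/2}"

lemma discr_eq_Sup_discr_values: "discr \<mu> = Sup (discr_values \<mu>)"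
proof -
  have "{measure \<mu> (arc a l) - l | a l. 0 \<le> l \<and> l \<le> 1} = discr_values \<mu>"
    unfolding discr_values_def
  proof safe
    fix a l :: real assume "0 \<le> l" "l \<le> 1"
    then show "\<exists>c h. measure \<mu> (arc a l) - l = measure \<mu> (centred_arc c h) - 2 * h \<and> 0 \<le> h \<and> h \<le> 1/2"
      by (intro exI[of _ "a + l/2"] exI[of _ "l/2"]) (simp add: arc_eq_centred_arc)
  next
    fix c h :: real assume "0 \<le> h" "h \<le> 1/2"
    then show "\<exists>a l. measure \<mu> (centred_arc c h) - 2 * h = measure \<mu> (arc a l) - l \<and> 0 \<le> l \<and> l \<le> 1"
      by (intro exI[of _ "c - h"] exI[of _ "2 * h"]) (simp add: arc_eq_centred_arc)
  qed
  then show ?thesis by (simp add: discr_def)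
qed

lemma bdd_above_discr_values:
  assumes "torus_prob \<mu>"
  shows "bdd_above (discr_values \<mu>)"
proof (rule bdd_aboveI)
  fix x assume "x \<in> discr_values \<mu>"
  then obtain c h where "x = measure \<mu> (centred_arc c h) - 2 * h" "0 \<le> h"
    by (auto simp: discr_values_def)
  then show "x \<le> 1"
    using prob_space.prob_le_1[OF torus_prob_prob_space[OF assms], of "centred_arc c h"] by linarith
qed

lemma discr_ge:
  assumes \<mu>: "torus_prob \<mu>" and "0 \<le> h"
  shows "measure \<mu> (centred_arc c h) - 2 * h \<le> discr \<mu>"
proof -
  have "measure \<mu> (centred_arc c (min h (1/2))) - 2 * min h (1/2) \<in> discr_values \<mu>"
    unfolding discr_values_def using \<open>0 \<le> h\<close>
    by (intro CollectI exI[of _ c] exI[of _ "min h (1/2)"]) auto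
  then have "measure \<mu> (centred_arc c (min h (1/2))) - 2 * min h (1/2) \<le> discr \<mu>"
    unfolding discr_eq_Sup_discr_values by (intro cSup_upper bdd_above_discr_values \<mu>)
  then show ?thesis
    using measure_centred_arc_full[OF \<mu>, of _ c] by (cases "h \<le> 1/2") auto
qed

lemma discr_nonneg: "torus_prob \<mu> \<Longrightarrow> 0 \<le> discr \<mu>"
  using discr_ge[of \<mu> "1/2" 0] measure_centred_arc_full[of \<mu> "1/2" 0] by simp

lemma discr_approx:
  assumes "torus_prob \<mu>" "e > 0"
  obtains c h where "0 \<le> c" "c \<le> 1" "0 \<le> h" "h \<le> 1/2"
    "discr \<mu> - e < measure \<mu> (centred_arc c h) - 2 * h"
proof -
  have "discr \<mu> - e < Sup (discr_values \<mu>)"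
    using assms by (simp add: discr_eq_Sup_discr_values)
  moreover have "discr_values \<mu> \<noteq> {}"
    by (auto simp: discr_values_def)
  ultimately obtain c h where "0 \<le> h" "h \<le> 1/2"
    "discr \<mu> - e < measure \<mu> (centred_arc (frac c) h) - 2 * h"
    by (elim less_cSupE) (auto simp: discr_values_def centred_arc_frac)
  then show ?thesis
    using that[of "frac c" h] frac_lt_1[of c] by simp
qed

lemma discr_le:
  assumes "torus_prob \<mu>"
    and "\<And>c h. 0 \<le> h \<Longrightarrow> h \<le> 1/2 \<Longrightarrow> measure \<mu> (centred_arc c h) - 2 * h \<le> B"
  shows "discr \<mu> \<le> B"
  unfolding discr_eq_Sup_discr_values discr_values_def
  by (rule cSup_least) (use assms in auto)

definition tent :: "real \<Rightarrow> real \<Rightarrow> real \<Rightarrow> real \<Rightarrow> real" where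
  "tent c h e t = max 0 (min 1 ((h + e - circle_dist (t - c)) / e))"

lemma continuous_tent: "continuous_on UNIV (tent c h e)"
proof (cases "e = 0")
  case False
  then show ?thesis
    unfolding tent_def
    by (intro continuous_intros continuous_on_compose2[OF continuous_circle_dist]) auto
qed (simp add: tent_def)

lemma tent_periodic: "tent c h e (t + 1) = tent c h e t"
  using circle_dist_add_int[of "t - c" 1] by (simp add: tent_def algebra_simps)

lemma weak_conv_tent:
  "weak_conv \<rho>s \<rho> \<Longrightarrow> (\<lambda>n. \<integral>t. tent c h e t \<partial>\<rho>s n) \<longlonglongrightarrow> (\<integral>t. tent c h e t \<partial>\<rho>)"
  using continuous_tent tent_periodic unfolding weak_conv_def by blast

lemma
  assumes "torus_prob \<mu>" "e > 0"
  shows measure_centred_arc_le_integral_tent: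
      "measure \<mu> (centred_arc c h) \<le> (\<integral>t. tent c h e t \<partial>\<mu>)"
    and integral_tent_le_measure_centred_arc:
      "(\<integral>t. tent c h e t \<partial>\<mu>) \<le> measure \<mu> (centred_arc c (h + e))"
proof -
  interpret prob_space \<mu> using torus_prob_prob_space[OF assms(1)] .
  have sp: "space \<mu> = {0..<1}" by (rule space_torus_prob[OF assms(1)])
  have tent_int: "integrable \<mu> (tent c h e)"
    by (rule integrable_const_bound[where B=1])
       (auto simp: tent_def measurable_torus_prob[OF assms(1)] borel_measurable_continuous_onI[OF continuous_tent])
  have ind_int: "integrable \<mu> (indicator (centred_arc c h') :: real \<Rightarrow> real)" for h'
    by (rule integrable_real_indicator[OF centred_arc_in_sets[OF assms(1)]])
       (simp add: less_top[symmetric])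
  have ind_eq: "measure \<mu> (centred_arc c h') = (\<integral>t. indicator (centred_arc c h') t \<partial>\<mu>)" for h'
    using centred_arc_in_sets[OF assms(1)] by simp
  show "measure \<mu> (centred_arc c h) \<le> (\<integral>t. tent c h e t \<partial>\<mu>)"
    unfolding ind_eq using assms(2) sp
    by (intro integral_mono[OF ind_int tent_int])
       (auto simp: tent_def centred_arc_def indicator_def field_simps)
  show "(\<integral>t. tent c h e t \<partial>\<mu>) \<le> measure \<mu> (centred_arc c (h + e))"
    unfolding ind_eq using assms(2) sp
    by (intro integral_mono[OF tent_int ind_int])
       (auto simp: tent_def centred_arc_def indicator_def field_simps)
qed

lemma eventually_discr_gt:
  assumes \<rho>: "torus_prob \<rho>" and \<rho>s: "\<And>n. torus_prob (\<rho>s n)" and wc: "weak_conv \<rho>s \<rho>"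
    and "e > 0"
  shows "eventually (\<lambda>n. discr \<rho> - 4 * e < discr (\<rho>s n)) sequentially"
proof -
  obtain c h where ch: "0 \<le> h" "h \<le> 1/2" "discr \<rho> - e < measure \<rho> (centred_arc c h) - 2 * h"
    using discr_approx[OF \<rho> \<open>e > 0\<close>] .
  have "eventually (\<lambda>n. (\<integral>t. tent c h e t \<partial>\<rho>) - e < (\<integral>t. tent c h e t \<partial>\<rho>s n)) sequentially"
    using order_tendstoD(1)[OF weak_conv_tent[OF wc]] \<open>e > 0\<close> by simp
  then show ?thesis
  proof eventually_elim
    case (elim n)
    have "discr \<rho> - 4 * e < measure \<rho> (centred_arc c h) - 2 * h - 3 * e"
      using ch by simp
    also have "\<dots> \<le> (\<integral>t. tent c h e t \<partial>\<rho>) - 2 * h - 3 * e"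
      using measure_centred_arc_le_integral_tent[OF \<rho> \<open>e > 0\<close>] by simp
    also have "\<dots> < (\<integral>t. tent c h e t \<partial>\<rho>s n) - 2 * h - 2 * e"
      using elim by simp
    also have "\<dots> \<le> measure (\<rho>s n) (centred_arc c (h + e)) - 2 * (h + e)"
      using integral_tent_le_measure_centred_arc[OF \<rho>s \<open>e > 0\<close>] by simp
    also have "\<dots> \<le> discr (\<rho>s n)"
      using discr_ge[OF \<rho>s[of n], of "h + e" c] ch(1) \<open>e > 0\<close> by simp
    finally show ?case .
  qed
qed

lemma centred_arc_grid_cover:
  fixes N :: nat and c h :: real
  assumes "N > 0" "0 \<le> h" "h \<le> 1/2"
  obtains j i :: nat where "j < N" "i \<le> N" "h \<le> real i / N" "real i / N \<le> h + 1 / N"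
    "centred_arc c h \<subseteq> centred_arc (real j / N) (real i / N + 1 / N)"
proof -
  define j where "j = nat \<lfloor>frac c * N\<rfloor>"
  define i where "i = nat \<lceil>h * N\<rceil>"
  have N: "real N > 0" using assms(1) by simp
  have fc: "0 \<le> frac c * N" "frac c * N < N"
    using N frac_lt_1[of c] by simp_all
  then have j: "j < N" "real j \<le> frac c * N" "frac c * N < j + 1"
    using real_of_int_floor_add_one_gt[of "frac c * N"]
    unfolding j_def by (simp_all add: nat_less_iff floor_less_iff of_nat_nat add.commute)
  have hN: "0 \<le> h * N" "h * N \<le> N"
    using assms(2,3) N by simp_all
  then have i: "i \<le> N" "h * N \<le> i" "i < h * N + 1"
    using ceiling_correct[of "h * N"]
    unfolding i_def by (simp_all add: nat_le_iff ceiling_le_iff of_nat_nat)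
  have "circle_dist (c - j / N) = circle_dist ((frac c - j / N) + of_int \<lfloor>c\<rfloor>)"
    by (simp add: frac_def)
  also have "\<dots> \<le> \<bar>frac c - j / N\<bar>"
    using circle_dist_add_int circle_dist_le_abs by metis
  also have "\<dots> = (frac c * N - j) / N"
    using j(2) N by (simp add: field_simps)
  also have "\<dots> \<le> 1 / N"
    using j(3) N by (intro divide_right_mono) auto
  finally have "centred_arc c h \<subseteq> centred_arc (j / N) (h + 1 / N)"
    by (rule centred_arc_subset)
  also have "\<dots> \<subseteq> centred_arc (j / N) (i / N + 1 / N)"
    using i(2) N by (intro centred_arc_mono) (simp add: field_simps)
  finally show ?thesis
    using that j(1) i N by (simp add: field_simps)
qed

lemma eventually_discr_le:
  fixes N :: nat
  assumes \<rho>: "torus_prob \<rho>" and \<rho>s: "\<And>n. torus_prob (\<rho>s n)" and wc: "weak_conv \<rho>s \<rho>"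
    and "N > 0"
  shows "eventually (\<lambda>n. discr (\<rho>s n) \<le> discr \<rho> + 7 / N) sequentially"
proof -
  define e where "e = 1 / real N"
  have e: "e > 0" using \<open>N > 0\<close> by (simp add: e_def)
  define f where "f j i = tent (real j / N) (real i / N + e) e" for j i :: nat
  have "\<forall>(j, i) \<in> {..<N} \<times> {..N}.
      eventually (\<lambda>n. (\<integral>t. f j i t \<partial>\<rho>s n) < (\<integral>t. f j i t \<partial>\<rho>) + e) sequentially"
    using order_tendstoD(2)[OF weak_conv_tent[OF wc]] e by (auto simp: f_def)
  then have "eventually (\<lambda>n. \<forall>(j, i) \<in> {..<N} \<times> {..N}.
      (\<integral>t. f j i t \<partial>\<rho>s n) < (\<integral>t. f j i t \<partial>\<rho>) + e) sequentially"
    by (subst eventually_ball_finite_distrib) (auto simp: case_prod_beta)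
  then show ?thesis
  proof eventually_elim
    case (elim n)
    show ?case
    proof (rule discr_le[OF \<rho>s])
      fix c h :: real assume h: "0 \<le> h" "h \<le> 1/2"
      obtain j i :: nat where ji: "j < N" "i \<le> N" "h \<le> real i / N" "real i / N \<le> h + e"
        and sub: "centred_arc c h \<subseteq> centred_arc (real j / N) (real i / N + e)"
        using centred_arc_grid_cover[OF \<open>N > 0\<close> h] unfolding e_def .
      have "measure (\<rho>s n) (centred_arc c h) \<le> measure (\<rho>s n) (centred_arc (j / N) (i / N + e))"
        by (rule measure_centred_arc_mono[OF \<rho>s sub])
      also have "\<dots> \<le> (\<integral>t. f j i t \<partial>\<rho>s n)"
        unfolding f_def by (rule measure_centred_arc_le_integral_tent[OF \<rho>s e])
      also have "\<dots> < (\<integral>t. f j i t \<partial>\<rho>) + e"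
        using elim ji(1,2) by auto
      also have "\<dots> \<le> measure \<rho> (centred_arc (j / N) (i / N + e + e)) + e"
        unfolding f_def
        using integral_tent_le_measure_centred_arc[OF \<rho> e, of "real j / N" "real i / N + e"]
        by linarith
      also have "\<dots> \<le> discr \<rho> + 2 * (i / N + e + e) + e"
        using discr_ge[OF \<rho>, of "i / N + e + e" "j / N"] h ji e by simp
      finally show "measure (\<rho>s n) (centred_arc c h) - 2 * h \<le> discr \<rho> + 7 / N"
        using ji by (simp add: e_def)
    qed
  qed
qed

lemma discr_tendsto:
  assumes \<rho>: "torus_prob \<rho>" and \<rho>s: "\<And>n. torus_prob (\<rho>s n)" and wc: "weak_conv \<rho>s \<rho>"
  shows "(\<lambda>n. discr (\<rho>s n)) \<longlonglongrightarrow> discr \<rho>"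
proof (rule order_tendstoI)
  fix a assume "a < discr \<rho>"
  then have "(discr \<rho> - a) / 4 > 0" "discr \<rho> - 4 * ((discr \<rho> - a) / 4) = a"
    by (simp_all add: field_simps)
  then show "eventually (\<lambda>n. a < discr (\<rho>s n)) sequentially"
    using eventually_discr_gt[OF \<rho> \<rho>s wc] by metis
next
  fix a assume "discr \<rho> < a"
  then obtain N where N: "N > 0" "inverse (real N) < (a - discr \<rho>) / 7"
    using ex_inverse_of_nat_less[of "(a - discr \<rho>) / 7"] by auto
  then have "7 / real N < a - discr \<rho>" by (simp add: field_simps)
  with eventually_discr_le[OF \<rho> \<rho>s wc N(1)]
  show "eventually (\<lambda>n. discr (\<rho>s n) < a) sequentially"
    by (auto elim: eventually_mono)
qed

lemma measure_centred_arc_right_continuous: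
  assumes "torus_prob \<mu>"
  shows "(\<lambda>m. measure \<mu> (centred_arc c (h + inverse (Suc m)))) \<longlonglongrightarrow> measure \<mu> (centred_arc c h)"
proof -
  interpret prob_space \<mu> using torus_prob_prob_space[OF assms] .
  have "(\<Inter>m. centred_arc c (h + inverse (Suc m))) = centred_arc c h"
  proof (intro equalityI subsetI)
    fix t assume t: "t \<in> (\<Inter>m. centred_arc c (h + inverse (Suc m)))"
    have "(\<lambda>m. h + inverse (Suc m)) \<longlonglongrightarrow> h"
      using tendsto_add[OF tendsto_const LIMSEQ_inverse_real_of_nat, of h] by simp
    moreover have "circle_dist (t - c) \<le> h + inverse (Suc m)" for m
      using t by (auto simp: centred_arc_def)
    ultimately have "circle_dist (t - c) \<le> h"
      by (intro LIMSEQ_le_const) auto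
    then show "t \<in> centred_arc c h"
      using t by (auto simp: centred_arc_def)
  qed (auto simp: centred_arc_def intro: order_trans)
  moreover have "(\<lambda>m. measure \<mu> (centred_arc c (h + inverse (Suc m)))) \<longlonglongrightarrow>
      measure \<mu> (\<Inter>m. centred_arc c (h + inverse (Suc m)))"
    using centred_arc_in_sets[OF assms]
    by (intro finite_Lim_measure_decseq)
       (auto simp: decseq_def intro!: centred_arc_mono add_left_mono le_imp_inverse_le)
  ultimately show ?thesis by simp
qed

lemma measure_centred_arc_upper_semicontinuous:
  assumes \<mu>: "torus_prob \<mu>" and c: "cs \<longlonglongrightarrow> c" and h: "hs \<longlonglongrightarrow> h"
    and g: "g \<longlonglongrightarrow> L" and le: "\<And>k. g k \<le> measure \<mu> (centred_arc (cs k) (hs k))"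
  shows "L \<le> measure \<mu> (centred_arc c h)"
proof (rule LIMSEQ_le_const[OF measure_centred_arc_right_continuous[OF \<mu>]], intro exI allI impI)
  fix m :: nat
  define e where "e = inverse (Suc m) / 2"
  have e: "e > 0" by (simp add: e_def)
  have "eventually (\<lambda>k. g k \<le> measure \<mu> (centred_arc c (h + inverse (Suc m)))) sequentially"
    using tendstoD[OF c e] tendstoD[OF h e]
  proof eventually_elim
    case (elim k)
    have "circle_dist (cs k - c) \<le> e"
      using circle_dist_le_abs[of "cs k - c"] elim by (simp add: dist_real_def)
    then have "centred_arc (cs k) (hs k) \<subseteq> centred_arc c (hs k + e)"
      by (rule centred_arc_subset)
    also have "\<dots> \<subseteq> centred_arc c (h + inverse (Suc m))"
    proof (rule centred_arc_mono)
      have "hs k - h < e"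
        using elim(2) by (simp add: dist_real_def abs_less_iff)
      then show "hs k + e \<le> h + inverse (Suc m)"
        unfolding e_def by linarith
    qed
    finally show ?case
      using le[of k] measure_centred_arc_mono[OF \<mu>] by (meson order_trans)
  qed
  then show "L \<le> measure \<mu> (centred_arc c (h + inverse (Suc m)))"
    by (rule tendsto_upperbound[OF g]) simp
qed

lemma discr_attained:
  assumes \<mu>: "torus_prob \<mu>"
  shows "\<exists>a l. 0 \<le> l \<and> l \<le> 1 \<and> discr \<mu> = measure \<mu> (arc a l) - l"
proof -
  have "\<exists>p \<in> {0..1} \<times> {0..1/2}.
      discr \<mu> - inverse (Suc n) < measure \<mu> (centred_arc (fst p) (snd p)) - 2 * snd p" for n
  proof -
    have "inverse (real (Suc n)) > 0" by simp
    then obtain c h where "0 \<le> c" "c \<le> 1" "0 \<le> h" "h \<le> 1/2"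
      "discr \<mu> - inverse (Suc n) < measure \<mu> (centred_arc c h) - 2 * h"
      by (rule discr_approx[OF \<mu>])
    then show ?thesis by force
  qed
  then obtain p where p: "\<And>n. p n \<in> {0..1} \<times> {0..1/2}"
    and p_gt: "\<And>n. discr \<mu> - inverse (Suc n) < measure \<mu> (centred_arc (fst (p n)) (snd (p n))) - 2 * snd (p n)"
    by metis
  obtain q r where q: "q \<in> {0..1} \<times> {0..1/2}" and r: "strict_mono r" and lim: "(p \<circ> r) \<longlonglongrightarrow> q"
    using compact_imp_seq_compact[OF compact_Times[OF compact_Icc compact_Icc]] p
    by (metis seq_compactE)
  define c h where "c = fst q" and "h = snd q"
  have h: "0 \<le> h" "h \<le> 1/2" using q by (auto simp: h_def)
  have lim_h: "(\<lambda>k. snd (p (r k))) \<longlonglongrightarrow> h"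
    using tendsto_snd[OF lim] by (simp add: h_def comp_def)
  have lim_c: "(\<lambda>k. fst (p (r k))) \<longlonglongrightarrow> c"
    using tendsto_fst[OF lim] by (simp add: c_def comp_def)
  have "(\<lambda>k. discr \<mu> - inverse (Suc (r k)) + 2 * snd (p (r k))) \<longlonglongrightarrow> discr \<mu> - 0 + 2 * h"
    using LIMSEQ_subseq_LIMSEQ[OF LIMSEQ_inverse_real_of_nat r]
    by (intro tendsto_intros lim_h) (simp add: comp_def)
  moreover have "discr \<mu> - inverse (Suc (r k)) + 2 * snd (p (r k))
      \<le> measure \<mu> (centred_arc (fst (p (r k))) (snd (p (r k))))" for k
    using p_gt[of "r k"] by simp
  ultimately have "discr \<mu> - 0 + 2 * h \<le> measure \<mu> (centred_arc c h)"
    by (rule measure_centred_arc_upper_semicontinuous[OF \<mu> lim_c lim_h])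
  then have "discr \<mu> = measure \<mu> (centred_arc c h) - 2 * h"
    using discr_ge[OF \<mu> h(1), of c] by simp
  then show ?thesis
    using h by (intro exI[of _ "c - h"] exI[of _ "2 * h"]) (simp add: arc_eq_centred_arc)
qed

locale periodic_kernel =
  fixes W :: "real \<Rightarrow> ereal"
  assumes periodic: "\<forall>x. W (x + 1) = W x"
    and finite_off_Ints: "\<forall>x. x \<notin> \<int> \<longrightarrow> \<bar>W x\<bar> \<noteq> \<infinity>"
    and integrable_unit: "set_integrable lborel {0..1} (\<lambda>x. real_of_ereal (W x))"
begin

abbreviation w :: "real \<Rightarrow> real" where "w x \<equiv> real_of_ereal (W x)"

lemma W_add_int: "W (x + of_int k) = W x"
proof -
  have nat: "W (y + real n) = W y" for y n
    by (induction n arbitrary: y) (use periodic in \<open>simp_all add: add.assoc[symmetric]\<close>)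
  show ?thesis
  proof (cases "k \<ge> 0")
    case True
    then show ?thesis using nat[of x "nat k"] by simp
  next
    case False
    then show ?thesis using nat[of "x + of_int k" "nat (- k)"] by simp
  qed
qed

lemma w_add_int: "w (x + of_int k) = w x"
  by (simp add: W_add_int)

lemma W_eq_w: "x \<notin> \<int> \<Longrightarrow> W x = ereal (w x)"
  using finite_off_Ints by (cases "W x") auto

lemma borel_measurable_w [measurable]: "w \<in> borel_measurable borel"
proof -
  let ?g = "\<lambda>x. indicator {0..1} x *\<^sub>R w x"
  have "?g \<in> borel_measurable borel"
    using borel_measurable_integrable[OF integrable_unit[unfolded set_integrable_def]] by simp
  moreover have "frac \<in> borel_measurable (borel :: real measure)"
    unfolding frac_def[abs_def] by measurable
  ultimately have "(\<lambda>x. ?g (frac x)) \<in> borel_measurable borel"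
    by (rule measurable_compose[rotated])
  moreover have "?g (frac x) = w x" for x
    using w_add_int[of "frac x" "\<lfloor>x\<rfloor>"] frac_lt_1[of x] by (simp add: frac_def less_imp_le)
  ultimately show ?thesis by simp
qed

lemma set_integrable_w_unit: "set_integrable lborel {of_int k .. of_int k + 1} w"
proof -
  have "(\<lambda>x. indicator {of_int k .. of_int k + 1} (of_int k + 1 * x) *\<^sub>R w (of_int k + 1 * x))
      = (\<lambda>x. indicator {0..1} x *\<^sub>R w x)"
    by (auto simp: indicator_def w_add_int add.commute[of "of_int k"])
  then have "integrable lborel (\<lambda>x. indicator {of_int k .. of_int k + 1} (of_int k + 1 * x) *\<^sub>R w (of_int k + 1 * x))"
    using integrable_unit by (simp add: set_integrable_def)
  then show ?thesis
    unfolding set_integrable_def by (subst (asm) lborel_integrable_real_affine_iff) simp_all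
qed

lemma set_integrable_w: "set_integrable lborel {a..b} w"
proof -
  have sym: "set_integrable lborel {- real n .. real n} w" for n
  proof (induction n)
    case 0
    show ?case
      by (rule set_integrable_subset[OF set_integrable_w_unit[of 0]]) auto
  next
    case (Suc n)
    have "set_integrable lborel
        ({- real (Suc n) .. - real n} \<union> {- real n .. real n} \<union> {real n .. real (Suc n)}) w"
      using set_integrable_w_unit[of "- int (Suc n)"] set_integrable_w_unit[of "int n"]
      by (intro set_integrable_Un Suc) (simp_all add: add.commute)
    moreover have "{- real (Suc n) .. - real n} \<union> {- real n .. real n} \<union> {real n .. real (Suc n)}
        = {- real (Suc n) .. real (Suc n)}"
      by auto
    ultimately show ?case by simp
  qed
  define n where "n = nat \<lceil>\<bar>a\<bar> + \<bar>b\<bar>\<rceil>"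
  have "{a..b} \<subseteq> {- real n .. real n}"
    unfolding n_def by auto linarith+
  then show ?thesis
    using set_integrable_subset[OF sym[of n]] by simp
qed

lemma w_integrable_on: "w integrable_on {a..b}"
  using set_borel_integral_eq_integral(1)[OF set_integrable_w] .

lemma set_integral_w_eq_integral: "(LINT x:{a..b}|lborel. w x) = integral {a..b} w"
  using set_borel_integral_eq_integral(2)[OF set_integrable_w] .

lemma set_integral_w_translate:
  "(LINT x:{c..d}|lborel. w (x - y)) = (LINT x:{c - y..d - y}|lborel. w x)"
proof -
  let ?f = "\<lambda>x. indicator {c - y..d - y} x *\<^sub>R w x"
  have "(LINT x:{c - y..d - y}|lborel. w x) = \<bar>1\<bar> *\<^sub>R (\<integral>x. ?f (- y + 1 * x) \<partial>lborel)"
    unfolding set_lebesgue_integral_def by (rule lborel_integral_real_affine) simp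
  also have "(\<lambda>x. ?f (- y + 1 * x)) = (\<lambda>x. indicator {c..d} x *\<^sub>R w (x - y))"
    by (auto simp: indicator_def)
  finally show ?thesis by (simp add: set_lebesgue_integral_def)
qed

lemma integral_w_period:
  assumes "-1 \<le> a" "a \<le> 0"
  shows "integral {a..a+1} w = integral {0..1} w"
proof -
  have "integral {a..0} w = integral {a+1..1} w"
    using set_integral_w_translate[of "a+1" 1 1] w_add_int[of _ "-1"]
    by (simp add: set_integral_w_eq_integral)
  then have "integral {a..a+1} w = integral {a+1..1} w + integral {0..a+1} w"
    using Henstock_Kurzweil_Integration.integral_combine[OF assms(2) _ w_integrable_on, of "a+1"] assms by simp
  also have "\<dots> = integral {0..1} w"
    using Henstock_Kurzweil_Integration.integral_combine[of 0 "a+1" 1 w] w_integrable_on assms by simp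
  finally show ?thesis .
qed

definition window_integral :: "real \<Rightarrow> real \<Rightarrow> real \<Rightarrow> real" where
  "window_integral c d y = (LINT x:{c..d}|lborel. w (x - y))"

lemma window_integral_eq_integral: "window_integral c d y = integral {c - y..d - y} w"
  unfolding window_integral_def set_integral_w_translate set_integral_w_eq_integral ..

lemma window_integral_periodic: "window_integral c d (y + 1) = window_integral c d y"
proof -
  have "w (x - (y + 1)) = w (x - y)" for x
    using w_add_int[of "x - y" "-1"] by (simp add: algebra_simps)
  then show ?thesis by (simp add: window_integral_def)
qed

lemma continuous_window_integral:
  assumes "c \<le> d"
  shows "continuous_on UNIV (window_integral c d)"
proof (rule continuous_at_imp_continuous_on, intro ballI)
  fix y0 :: real
  define R where "R = \<bar>y0\<bar> + \<bar>c\<bar> + \<bar>d\<bar> + 2"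
  define F where "F t = integral {-R..t} w" for t
  have F: "continuous_on {-R..R} F"
    unfolding F_def by (rule indefinite_integral_continuous_1[OF w_integrable_on])
  have in_R: "c - y \<in> {-R..R}" "d - y \<in> {-R..R}" if "y \<in> ball y0 1" for y
    using that by (auto simp: R_def dist_real_def)
  have eq: "window_integral c d y = F (d - y) - F (c - y)" if "y \<in> ball y0 1" for y
    using Henstock_Kurzweil_Integration.integral_combine[of "-R" "c - y" "d - y" w] in_R[OF that] assms w_integrable_on
    by (simp add: window_integral_eq_integral F_def)
  have "continuous_on (ball y0 1) (\<lambda>y. F (d - y) - F (c - y))"
    by (intro continuous_intros continuous_on_compose2[OF F]) (use in_R in auto)
  then have "continuous_on (ball y0 1) (window_integral c d)"
    by (rule continuous_on_cong[THEN iffD1, rotated 2]) (simp_all add: eq)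
  then show "isCont (window_integral c d) y0"
    using continuous_on_eq_continuous_at[OF open_ball, of y0 1 "window_integral c d"] by simp
qed

lemma weak_conv_window_integral:
  "weak_conv \<rho>s \<rho> \<Longrightarrow> c \<le> d \<Longrightarrow>
    (\<lambda>n. \<integral>y. window_integral c d y \<partial>\<rho>s n) \<longlonglongrightarrow> (\<integral>y. window_integral c d y \<partial>\<rho>)"
  using continuous_window_integral window_integral_periodic unfolding weak_conv_def by blast

lemma window_integral_unit:
  "0 \<le> y \<Longrightarrow> y < 1 \<Longrightarrow> window_integral 0 1 y = integral {0..1} w"
  using integral_w_period[of "-y"] by (simp add: window_integral_eq_integral)

end

lemma pair_sigma_finite_torus_prob: "torus_prob \<mu> \<Longrightarrow> pair_sigma_finite lborel \<mu>"
  unfolding pair_sigma_finite_def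
  by (metis torus_prob_prob_space prob_space_imp_sigma_finite sigma_finite_lborel)

lemma measurable_diff_torus_prob:
  assumes "torus_prob \<mu>"
  shows "(\<lambda>p. fst p - snd p) \<in> borel_measurable (lborel \<Otimes>\<^sub>M \<mu>)"
  using measurable_compose[OF measurable_snd measurable_torus_prob[OF assms, of "\<lambda>y. y"]]
  by (intro borel_measurable_diff) simp_all

lemma enn2ereal_eq_ereal_enn2real: "x \<noteq> \<infinity> \<Longrightarrow> enn2ereal x = ereal (enn2real x)"
  by (cases x rule: ennreal_cases) auto

lemma conv_eq_ereal_integral:
  assumes f: "integrable \<mu> f" and W: "AE y in \<mu>. W (x - y) = ereal (f y)"
  shows "conv W \<mu> x = ereal (\<integral>y. f y \<partial>\<mu>)"
proof -
  have pos: "(\<integral>\<^sup>+y. e2ennreal (W (x - y)) \<partial>\<mu>) = (\<integral>\<^sup>+y. ennreal (f y) \<partial>\<mu>)"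
    and neg: "(\<integral>\<^sup>+y. e2ennreal (- W (x - y)) \<partial>\<mu>) = (\<integral>\<^sup>+y. ennreal (- f y) \<partial>\<mu>)"
    using W by (auto intro!: nn_integral_cong_AE elim!: eventually_mono simp: e2ennreal_ereal)
  have "(\<integral>\<^sup>+y. ennreal (f y) \<partial>\<mu>) \<noteq> \<infinity>" "(\<integral>\<^sup>+y. ennreal (- f y) \<partial>\<mu>) \<noteq> \<infinity>"
    using f unfolding real_integrable_def by auto
  then show ?thesis
    unfolding conv_def real_lebesgue_integral_def[OF f] pos neg
    by (simp add: enn2ereal_eq_ereal_enn2real)
qed

context periodic_kernel
begin

definition wconv :: "real measure \<Rightarrow> real \<Rightarrow> real" where
  "wconv \<mu> x = (\<integral>y. w (x - y) \<partial>\<mu>)"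

lemma integrable_window_kernel:
  assumes \<mu>: "torus_prob \<mu>"
  shows "integrable (lborel \<Otimes>\<^sub>M \<mu>) (\<lambda>(x, y). indicator {c..d} x * w (x - y))"
proof -
  interpret P: pair_sigma_finite lborel \<mu> using pair_sigma_finite_torus_prob[OF \<mu>] .
  interpret prob_space \<mu> using torus_prob_prob_space[OF \<mu>] .
  let ?F = "\<lambda>(x, y). indicator {c..d} x * w (x - y)"
  let ?G = "\<lambda>x. indicator {c - 1..d} x * w x"
  define C where "C = (\<integral>\<^sup>+x. ennreal (norm (?G x)) \<partial>lborel)"
  have C: "C < \<infinity>"
    using set_integrable_w[of "c - 1" d]
    unfolding set_integrable_def integrable_iff_bounded C_def by simp
  have F_meas: "?F \<in> borel_measurable (lborel \<Otimes>\<^sub>M \<mu>)"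
    using measurable_compose[OF measurable_diff_torus_prob[OF \<mu>] borel_measurable_w]
    by (simp add: case_prod_beta')
  have inner: "(\<integral>\<^sup>+x. ennreal (norm (?F (x, y))) \<partial>lborel) \<le> C" if "y \<in> space \<mu>" for y
  proof -
    have y: "0 \<le> y" "y < 1" using that space_torus_prob[OF \<mu>] by auto
    have "(\<integral>\<^sup>+x. ennreal (norm (?F (x, y))) \<partial>lborel)
        \<le> (\<integral>\<^sup>+x. ennreal (norm (?G (- y + 1 * x))) \<partial>lborel)"
      using y by (intro nn_integral_mono) (auto simp: indicator_def real_of_ereal_pos)
    also have "\<dots> = C"
      unfolding C_def using nn_integral_real_affine[of "\<lambda>x. ennreal (norm (?G x))" 1 "- y"] by simp
    finally show ?thesis .
  qed
  have "(\<integral>\<^sup>+p. ennreal (norm (?F p)) \<partial>(lborel \<Otimes>\<^sub>M \<mu>))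
      = (\<integral>\<^sup>+y. (\<integral>\<^sup>+x. ennreal (norm (?F (x, y))) \<partial>lborel) \<partial>\<mu>)"
    using measurable_compose[OF F_meas measurable_compose[OF borel_measurable_norm measurable_ennreal]]
    by (intro P.nn_integral_snd[symmetric]) simp
  also have "\<dots> \<le> (\<integral>\<^sup>+y. C \<partial>\<mu>)"
    by (intro nn_integral_mono inner)
  also have "\<dots> < \<infinity>"
    using C by (simp add: emeasure_space_1)
  finally show ?thesis
    unfolding integrable_iff_bounded using F_meas by simp
qed

lemma
  assumes \<mu>: "torus_prob \<mu>"
  shows set_integrable_wconv: "set_integrable lborel {c..d} (wconv \<mu>)"
    and set_integral_wconv: "(LINT x:{c..d}|lborel. wconv \<mu> x) = (\<integral>y. window_integral c d y \<partial>\<mu>)"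
proof -
  interpret P: pair_sigma_finite lborel \<mu> using pair_sigma_finite_torus_prob[OF \<mu>] .
  note int = integrable_window_kernel[OF \<mu>, of c d]
  show "set_integrable lborel {c..d} (wconv \<mu>)"
    using P.integrable_fst'[OF int] by (simp add: set_integrable_def wconv_def)
  have "(\<integral>y. (\<integral>x. indicator {c..d} x * w (x - y) \<partial>lborel) \<partial>\<mu>)
      = (\<integral>x. (\<integral>y. indicator {c..d} x * w (x - y) \<partial>\<mu>) \<partial>lborel)"
    using P.Fubini_integral[OF int] by simp
  then show "(LINT x:{c..d}|lborel. wconv \<mu> x) = (\<integral>y. window_integral c d y \<partial>\<mu>)"
    by (simp add: window_integral_def wconv_def set_lebesgue_integral_def)
qed

lemma AE_W_diff_eq_w:
  assumes \<mu>: "torus_prob \<mu>" and x: "0 \<le> x" "x < 1" and "measure \<mu> {x} = 0"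
  shows "AE y in \<mu>. W (x - y) = ereal (w (x - y))"
proof -
  interpret prob_space \<mu> using torus_prob_prob_space[OF \<mu>] .
  have "{x} \<in> null_sets \<mu>"
    using assms sets_torus_prob[OF \<mu>, of "{x}"] by (simp add: null_sets_def emeasure_eq_measure)
  then have "AE y in \<mu>. y \<noteq> x"
    by (rule AE_I') auto
  then show ?thesis
    using AE_space
  proof eventually_elim
    case (elim y)
    then have y: "0 \<le> y" "y < 1" "y \<noteq> x"
      using space_torus_prob[OF \<mu>] by auto
    have "x - y \<notin> \<int>"
    proof
      assume "x - y \<in> \<int>"
      then obtain k where k: "x - y = of_int k" by (elim Ints_cases)
      then have "k = 0" using x y by linarith
      then show False using k y by simp
    qed
    then show ?case by (rule W_eq_w)
  qed
qed

lemma conv_eq_wconv_AE: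
  assumes \<mu>: "torus_prob \<mu>"
  shows "AE x in lborel. 0 \<le> x \<and> x < 1 \<longrightarrow> conv W \<mu> x = ereal (wconv \<mu> x)"
proof -
  interpret P: pair_sigma_finite lborel \<mu> using pair_sigma_finite_torus_prob[OF \<mu>] .
  interpret prob_space \<mu> using torus_prob_prob_space[OF \<mu>] .
  have "AE x in lborel. integrable \<mu> (\<lambda>y. indicator {0..1} x * w (x - y))"
    using P.AE_integrable_fst'[OF integrable_window_kernel[OF \<mu>, of 0 1]] by simp
  moreover have "AE x in lborel. measure \<mu> {x} = 0"
    by (rule AE_I'[OF countable_imp_null_set_lborel[OF countable_support]]) auto
  ultimately show ?thesis
  proof eventually_elim
    case (elim x)
    show ?case
    proof
      assume x: "0 \<le> x \<and> x < 1"
      then have "integrable \<mu> (\<lambda>y. w (x - y))"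
        using elim(1) by (simp add: indicator_def)
      then show "conv W \<mu> x = ereal (wconv \<mu> x)"
        unfolding wconv_def using AE_W_diff_eq_w[OF \<mu> _ _ elim(2)] x
        by (intro conv_eq_ereal_integral) auto
    qed
  qed
qed

end

lemma essinf_upper: "AE x in M. z \<le> f x \<Longrightarrow> z \<le> essinf M f"
  unfolding essinf_def by (rule Sup_upper) simp

lemma essinf_least: "(\<And>z. AE x in M. z \<le> f x \<Longrightarrow> z \<le> B) \<Longrightarrow> essinf M f \<le> B"
  unfolding essinf_def by (rule Sup_least) simp

lemma AE_ge_if_less_essinf:
  assumes "z < essinf M f"
  shows "AE x in M. z \<le> f x"
proof -
  obtain s where "AE x in M. s \<le> f x" "z < s"
    using assms unfolding essinf_def by (auto simp: less_Sup_iff)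
  then show ?thesis by (auto elim: eventually_mono)
qed

lemma AE_lebesgue_on_unit_interval:
  "(AE x in lebesgue_on {0..<1::real}. P x) \<longleftrightarrow> (AE x in lborel. 0 \<le> x \<and> x < 1 \<longrightarrow> P x)"
proof -
  have "{0..<1::real} \<in> sets lebesgue"
    by (rule sets_completionI_sets) simp
  then show ?thesis
    by (simp add: AE_restrict_space_iff AE_completion_iff)
qed

lemma tendsto_lowerbound_frequently:
  fixes f :: "'a \<Rightarrow> 'b::linorder_topology"
  assumes "(f \<longlongrightarrow> L) F" "frequently (\<lambda>x. a \<le> f x) F"
  shows "a \<le> L"
proof (rule ccontr)
  assume "\<not> a \<le> L"
  then have "eventually (\<lambda>x. f x < a) F"
    using order_tendstoD(2)[OF assms(1)] by simp
  with assms(2) show False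
    by (simp add: frequently_def not_le)
qed

lemma AE_right_averages_tendsto:
  fixes g :: "real \<Rightarrow> real"
  assumes "integrable lborel g"
  shows "AE x in lborel. ((\<lambda>h. integral {x..x+h} g / h) \<longlongrightarrow> g x) (at_right 0)"
proof -
  have "g integrable_on UNIV"
    using has_integral_integral_lborel[OF assms] by blast
  then have "g integrable_on cbox a b" for a b
    by (rule integrable_on_subcbox) simp
  then obtain N where N: "negligible N"
    and diff: "\<And>x e. \<lbrakk>x \<notin> N; 0 < e\<rbrakk> \<Longrightarrow> \<exists>d>0. \<forall>h. 0 < h \<and> h < d \<longrightarrow>
      norm (integral (cbox x (x + h *\<^sub>R One)) g /\<^sub>R h ^ DIM(real) - g x) < e"
    by (rule integrable_ccontinuous_explicit) blast
  have "AE x in lebesgue. x \<notin> N"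
    using N by (simp add: negligible_iff_null_sets AE_not_in)
  then have "AE x in lborel. x \<notin> N"
    by (simp add: AE_completion_iff)
  then show ?thesis
  proof eventually_elim
    case (elim x)
    show ?case
    proof (rule tendstoI)
      fix e :: real assume "e > 0"
      then obtain d where "d > 0" and d: "\<And>h. 0 < h \<Longrightarrow> h < d \<Longrightarrow>
          norm (integral (cbox x (x + h *\<^sub>R One)) g /\<^sub>R h ^ DIM(real) - g x) < e"
        using diff[OF elim] by blast
      then show "eventually (\<lambda>h. dist (integral {x..x+h} g / h) (g x) < e) (at_right 0)"
        unfolding eventually_at_right_field
        by (intro exI[of _ d]) (auto simp: dist_real_def cbox_interval divide_inverse_commute)
    qed
  qed
qed

lemma AE_ge_of_interval_integrals_ge:
  fixes f :: "real \<Rightarrow> real"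
  assumes f: "set_integrable lborel {a..b} f"
    and ge: "\<And>c d. a \<le> c \<Longrightarrow> c \<le> d \<Longrightarrow> d \<le> b \<Longrightarrow> z * (d - c) \<le> (LINT x:{c..d}|lborel. f x)"
  shows "AE x in lborel. a \<le> x \<and> x < b \<longrightarrow> z \<le> f x"
proof -
  define g where "g x = indicator {a..b} x *\<^sub>R f x" for x
  have "integrable lborel g"
    using f unfolding set_integrable_def g_def[abs_def] .
  from AE_right_averages_tendsto[OF this] show ?thesis
  proof eventually_elim
    case (elim x)
    show ?case
    proof
      assume x: "a \<le> x \<and> x < b"
      have "eventually (\<lambda>h. z \<le> integral {x..x+h} g / h) (at_right 0)"
        unfolding eventually_at_right_field
      proof (intro exI[of _ "b - x"] conjI allI impI)
        fix h :: real assume h: "0 < h" "h < b - x"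
        have "set_integrable lborel {x..x+h} f"
          by (rule set_integrable_subset[OF f]) (use x h in auto)
        moreover have "integral {x..x+h} f = integral {x..x+h} g"
          by (rule integral_cong) (use x h in \<open>auto simp: g_def\<close>)
        ultimately have "(LINT t:{x..x+h}|lborel. f t) = integral {x..x+h} g"
          by (simp add: set_borel_integral_eq_integral(2))
        then show "z \<le> integral {x..x+h} g / h"
          using ge[of x "x + h"] x h by (simp add: pos_le_divide_eq mult.commute)
      qed (use x in simp)
      then have "z \<le> g x"
        by (rule tendsto_lowerbound[OF elim]) (simp add: trivial_limit_at_right_real)
      then show "z \<le> f x"
        using x by (simp add: g_def)
    qed
  qed
qed

context periodic_kernel
begin

lemma integral_window_ge_if_AE_conv_ge:
  assumes \<mu>: "torus_prob \<mu>" and AE: "AE x in lebesgue_on {0..<1}. ereal z \<le> conv W \<mu> x"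
    and cd: "0 \<le> c" "c \<le> d" "d \<le> 1"
  shows "z * (d - c) \<le> (\<integral>y. window_integral c d y \<partial>\<mu>)"
proof -
  have "AE x in lborel. x \<in> {c..d} \<longrightarrow> z \<le> wconv \<mu> x"
    using AE[unfolded AE_lebesgue_on_unit_interval] conv_eq_wconv_AE[OF \<mu>] AE_lborel_singleton[of 1]
    by eventually_elim (use cd in auto)
  then have "(LINT x:{c..d}|lborel. z) \<le> (LINT x:{c..d}|lborel. wconv \<mu> x)"
    using cd(2) by (intro set_integral_mono_AE set_integrable_wconv[OF \<mu>])
      (auto simp: set_integrable_def intro!: integrable_real_mult_indicator)
  then show ?thesis
    using cd(2) by (simp add: set_integral_const set_integral_wconv[OF \<mu>] mult.commute)
qed

lemma essinf_conv_nonpos: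
  assumes \<mu>: "torus_prob \<mu>" and mean: "(LINT x:{0..1}|lborel. w x) = 0"
  shows "essinf (lebesgue_on {0..<1}) (conv W \<mu>) \<le> 0"
proof (rule essinf_least, rule ccontr)
  fix z assume AE: "AE x in lebesgue_on {0..<1}. z \<le> conv W \<mu> x" and "\<not> z \<le> 0"
  define r where "r = real_of_ereal (min z 1)"
  have r: "0 < r" "ereal r \<le> z"
    using \<open>\<not> z \<le> 0\<close> by (cases z; auto simp: r_def min_def)+
  have "AE x in lebesgue_on {0..<1}. ereal r \<le> conv W \<mu> x"
    using AE by eventually_elim (use r in auto)
  then have "r * (1 - 0) \<le> (\<integral>y. window_integral 0 1 y \<partial>\<mu>)"
    by (rule integral_window_ge_if_AE_conv_ge[OF \<mu>]) auto
  also have "\<dots> = (\<integral>y. 0 \<partial>\<mu>)"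
    using window_integral_unit space_torus_prob[OF \<mu>] mean
    by (intro Bochner_Integration.integral_cong) (auto simp: set_integral_w_eq_integral)
  finally show False using r by simp
qed

lemma Hfun_nonneg:
  "torus_prob \<mu> \<Longrightarrow> (LINT x:{0..1}|lborel. w x) = 0 \<Longrightarrow> 0 \<le> Hfun W \<mu>"
  using essinf_conv_nonpos unfolding Hfun_def by (simp add: ereal_uminus_le_reorder)

lemma essinf_conv_ge_if_frequently_ge:
  assumes \<rho>: "torus_prob \<rho>" and \<rho>s: "\<And>n. torus_prob (\<rho>s n)" and wc: "weak_conv \<rho>s \<rho>"
    and freq: "frequently (\<lambda>n. ereal z < essinf (lebesgue_on {0..<1}) (conv W (\<rho>s n))) sequentially"
  shows "ereal z \<le> essinf (lebesgue_on {0..<1}) (conv W \<rho>)"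
proof (rule essinf_upper)
  have ge: "z * (d - c) \<le> (LINT x:{c..d}|lborel. wconv \<rho> x)"
    if cd: "0 \<le> c" "c \<le> d" "d \<le> 1" for c d
  proof -
    have "frequently (\<lambda>n. z * (d - c) \<le> (\<integral>y. window_integral c d y \<partial>\<rho>s n)) sequentially"
      using freq by (rule frequently_elim1)
        (rule integral_window_ge_if_AE_conv_ge[OF \<rho>s AE_ge_if_less_essinf cd])
    then show ?thesis
      unfolding set_integral_wconv[OF \<rho>]
      by (rule tendsto_lowerbound_frequently[OF weak_conv_window_integral[OF wc cd(2)]])
  qed
  have "AE x in lborel. 0 \<le> x \<and> x < 1 \<longrightarrow> z \<le> wconv \<rho> x"
    by (rule AE_ge_of_interval_integrals_ge[OF set_integrable_wconv[OF \<rho>] ge])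
  then show "AE x in lebesgue_on {0..<1}. ereal z \<le> conv W \<rho> x"
    unfolding AE_lebesgue_on_unit_interval using conv_eq_wconv_AE[OF \<rho>]
    by eventually_elim auto
qed

lemma Hfun_lower_semicontinuous:
  assumes \<rho>: "torus_prob \<rho>" and \<rho>s: "\<And>n. torus_prob (\<rho>s n)" and wc: "weak_conv \<rho>s \<rho>"
  shows "Hfun W \<rho> \<le> liminf (\<lambda>n. Hfun W (\<rho>s n))"
proof -
  let ?E = "\<lambda>\<mu>. essinf (lebesgue_on {0..<1}) (conv W \<mu>)"
  have "limsup (\<lambda>n. ?E (\<rho>s n)) \<le> ?E \<rho>"
  proof (subst Limsup_le_iff, intro allI impI)
    fix y assume "?E \<rho> < y"
    then obtain z where z: "?E \<rho> < ereal z" "ereal z < y"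
      using ereal_dense2 by blast
    then have "\<not> frequently (\<lambda>n. ereal z < ?E (\<rho>s n)) sequentially"
      using essinf_conv_ge_if_frequently_ge[OF \<rho> \<rho>s wc, of z] by (meson not_le)
    then show "eventually (\<lambda>n. ?E (\<rho>s n) < y) sequentially"
      unfolding not_frequently using z(2) by (auto elim: eventually_mono)
  qed
  then show ?thesis
    unfolding Hfun_def ereal_Liminf_uminus by simp
qed

end

lemma liminf_divide_ereal_tendsto_pos:
  fixes Hs :: "nat \<Rightarrow> ereal"
  assumes qs: "qs \<longlonglongrightarrow> q" and q: "q > 0"
  shows "liminf (\<lambda>n. Hs n / ereal (qs n)) = liminf Hs / ereal q"
proof -
  have "eventually (\<lambda>n. qs n > 0) sequentially"
    using order_tendstoD(1)[OF qs q] .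
  then have "liminf (\<lambda>n. Hs n / ereal (qs n)) = liminf (\<lambda>n. ereal (inverse (qs n)) * Hs n)"
    by (intro Liminf_eq) (auto elim: eventually_mono simp: divide_ereal_def mult.commute)
  also have "\<dots> = ereal (inverse q) * liminf Hs"
    using q by (intro ereal_liminf_lim_mult tendsto_intros qs) auto
  also have "\<dots> = liminf Hs / ereal q"
    using q by (simp add: divide_ereal_def mult.commute)
  finally show ?thesis .
qed

lemma liminf_divide_ereal_tendsto_zero:
  fixes Hs :: "nat \<Rightarrow> ereal"
  assumes qs: "qs \<longlonglongrightarrow> 0" and qs_nonneg: "\<And>n. 0 \<le> qs n" and pos: "0 < liminf Hs"
  shows "liminf (\<lambda>n. Hs n / ereal (qs n)) = \<infinity>"
proof (rule ereal_top)
  fix B :: real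
  obtain h where h: "0 < h" "ereal h < liminf Hs"
    using ereal_dense2[OF pos] by (metis ereal_less(2) less_trans not_less_iff_gr_or_eq zero_ereal_def)
  define B' where "B' = max B 1"
  have B': "0 < B'" "B \<le> B'" by (auto simp: B'_def)
  have "eventually (\<lambda>n. ereal h < Hs n) sequentially"
    using h(2) by (rule less_LiminfD)
  moreover have "eventually (\<lambda>n. qs n < h / B') sequentially"
    using order_tendstoD(2)[OF qs] h(1) B'(1) by simp
  ultimately have "eventually (\<lambda>n. ereal B \<le> Hs n / ereal (qs n)) sequentially"
  proof eventually_elim
    case (elim n)
    show ?case
    proof (cases "qs n = 0")
      case True
      then show ?thesis
        using elim(1) h(1) by (cases "Hs n") (auto simp: divide_ereal_def)
    next
      case False
      then have qn: "0 < qs n" using qs_nonneg[of n] by simp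
      then have "B' < h / qs n"
        using elim(2) B'(1) by (simp add: field_simps)
      then have "ereal B \<le> ereal h * ereal (inverse (qs n))"
        using B'(2) by (simp add: field_simps)
      also have "\<dots> \<le> Hs n * ereal (inverse (qs n))"
        by (rule ereal_mult_right_mono) (use elim(1) qn in auto)
      finally show ?thesis
        using qn by (simp add: divide_ereal_def)
    qed
  qed
  then show "ereal B \<le> liminf (\<lambda>n. Hs n / ereal (qs n))"
    by (rule Liminf_bounded)
qed

text \<open>In \<open>ereal\<close>, \<open>H / 0 = H * \<infinity>\<close>: this is \<open>\<infinity>\<close> for \<open>H > 0\<close> and \<open>0\<close> for \<open>H = 0\<close>.\<close>

lemma divide_ereal_lower_semicontinuous:
  fixes H :: ereal and Hs :: "nat \<Rightarrow> ereal"
  assumes H: "0 \<le> H" "H \<le> liminf Hs" and Hs_nonneg: "\<And>n. 0 \<le> Hs n"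
    and qs: "qs \<longlonglongrightarrow> q" and qs_nonneg: "\<And>n. 0 \<le> qs n"
  shows "H / ereal q \<le> liminf (\<lambda>n. Hs n / ereal (qs n))"
proof -
  have "0 \<le> q"
    using qs_nonneg by (intro LIMSEQ_le_const[OF qs]) auto
  consider "0 < q" | "q = 0" "H = 0" | "q = 0" "0 < H"
    using \<open>0 \<le> q\<close> H(1) by force
  then show ?thesis
  proof cases
    case 1
    then show ?thesis
      using H(2) by (simp add: liminf_divide_ereal_tendsto_pos[OF qs])
  next
    case 2
    have "0 \<le> Hs n / ereal (qs n)" for n
      using Hs_nonneg[of n] qs_nonneg[of n] by (simp add: divide_ereal_def)
    then show ?thesis
      using 2 by (simp add: Liminf_bounded)
  next
    case 3
    then show ?thesis
      using H(2) qs qs_nonneg by (simp add: liminf_divide_ereal_tendsto_zero)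
  qed
qed

theorem lemma3p2:
  fixes W :: "real \<Rightarrow> ereal" and w' w'' :: "real \<Rightarrow> real" and C1 \<alpha> :: real
    and \<rho> :: "real measure"
  defines "w \<equiv> (\<lambda>x. real_of_ereal (W x))"
  assumes periodic: "\<forall>x. W (x + 1) = W x"
    and finite_off0: "\<forall>x. x \<notin> \<int> \<longrightarrow> \<bar>W x\<bar> \<noteq> \<infinity>"
    and H1_L1: "set_integrable lborel {0..1} w"
    and H1_mean: "(\<integral>x\<in>{0..1}. w x \<partial>lborel) = 0"
    and H1_C2: "\<forall>x. x \<notin> \<int> \<longrightarrow> (w has_real_derivative w' x) (at x) \<and> (w' has_real_derivative w'' x) (at x)"
    and H1_C2_cont: "continuous_on (- \<int>) w''"
    and H2: "\<forall>x. W (- x) = W x"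
    and H3: "(W \<longlongrightarrow> \<infinity>) (at 0)" "W 0 = \<infinity>"
    and H4: "C1 > 0" "\<forall>x. x \<notin> \<int> \<longrightarrow> w'' x \<ge> C1"
    and alpha: "\<alpha> > 0"
    and rho: "torus_prob \<rho>"
  shows "(\<exists>a l. 0 \<le> l \<and> l \<le> 1 \<and> discr \<rho> = measure \<rho> (arc a l) - l)
       \<and> (\<forall>\<rho>s. (\<forall>n. torus_prob (\<rho>s n)) \<and> weak_conv \<rho>s \<rho> \<longrightarrow>
              ((\<lambda>n. discr (\<rho>s n)) \<longlonglongrightarrow> discr \<rho>)
            \<and> Hfun W \<rho> \<le> liminf (\<lambda>n. Hfun W (\<rho>s n))
            \<and> Gfun W \<alpha> \<rho> \<le> liminf (\<lambda>n. Gfun W \<alpha> (\<rho>s n)))"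
proof -
  interpret periodic_kernel W
    using periodic finite_off0 H1_L1 by unfold_locales (simp_all add: w_def)
  have mean: "(LINT x:{0..1}|lborel. real_of_ereal (W x)) = 0"
    using H1_mean by (simp add: w_def)
  have "((\<lambda>n. discr (\<rho>s n)) \<longlonglongrightarrow> discr \<rho>)
      \<and> Hfun W \<rho> \<le> liminf (\<lambda>n. Hfun W (\<rho>s n))
      \<and> Gfun W \<alpha> \<rho> \<le> liminf (\<lambda>n. Gfun W \<alpha> (\<rho>s n))"
    if \<rho>s: "\<And>n. torus_prob (\<rho>s n)" and wc: "weak_conv \<rho>s \<rho>" for \<rho>s
  proof (intro conjI)
    show D: "(\<lambda>n. discr (\<rho>s n)) \<longlonglongrightarrow> discr \<rho>"
      by (rule discr_tendsto[OF rho \<rho>s wc])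
    show H: "Hfun W \<rho> \<le> liminf (\<lambda>n. Hfun W (\<rho>s n))"
      by (rule Hfun_lower_semicontinuous[OF rho \<rho>s wc])
    have "(\<lambda>n. discr (\<rho>s n) powr \<alpha>) \<longlonglongrightarrow> discr \<rho> powr \<alpha>"
      using alpha discr_nonneg[OF \<rho>s] by (intro tendsto_powr'[OF D tendsto_const]) auto
    then show "Gfun W \<alpha> \<rho> \<le> liminf (\<lambda>n. Gfun W \<alpha> (\<rho>s n))"
      unfolding Gfun_def
      by (rule divide_ereal_lower_semicontinuous[OF Hfun_nonneg[OF rho mean] H
            Hfun_nonneg[OF \<rho>s mean]]) simp
  qed
  then show ?thesis
    using discr_attained[OF rho] by blast
qed

end
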